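(* Let $A\in\mathbb R^{n\times n}$ be symmetric ($n\ge3$) and let $z\in\mathbb C\setminus\mathbb R$ with $|z|\le10$. Suppose $$\|R_{A,12}(z)-m_0(z)\mathbf I_2\|\le\delta,$$ where $0\le\delta\le\frac12\inf\{|m_0(w)|:w\in\mathbb C\setminus[-2,2],\,|w|\le10\}$. Then there is an absolute constant $C>0$ such that for $k=1,2$, $$\Big|\mathbf e_k^\top R_A(z)\mathbf 1-m_0(z)\big(1-a_k^\top R_A^{(12)}(z)\mathbf 1_{n-2}\big)\Big|\le C\delta\big(1+\|R_A(z)\mathbf 1\|_\infty\big).$$
   Context: $R_A(z)=(A-z\mathbf I)^{-1}$; $R_{A,12}(z)\in\mathbb C^{2\times2}$ is the upper-left $2\times2$ submatrix of $R_A(z)$; $R_A^{(12)}(z)\in\mathbb C^{(n-2)\times(n-2)}$ is the resolvent of the $(n-2)\times(n-2)$ submatrix of $A$ obtained by deleting its first two rows and columns; $a_k^\top\in\mathbb R^{1\times(n-2)}$ is the $k$-th row of $A$ with its first two entries removed; $\mathbf 1,\mathbf 1_{n-2}$ are all-ones vectors; $\|v\|_\infty=\max_i|v_i|$ and $\|\cdot\|$ is the spectral norm. $m_0(z)=\frac{-z+\sqrt{z^2-4}}2$ is the Stieltjes transform of the semicircle law, defined for $z\notin[-2,2]$ with branch cut on $[-2,2]$ and $\sqrt{z^2-4}\sim z$ as $|z|\to\infty$. *)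

theory Defs
  imports "HOL-Analysis.Analysis" "Jordan_Normal_Form.Matrix"
begin

(* Matrices are Jordan_Normal_Form matrices; indices are 0-based, so the
   paper's rows/columns 1,2 are our indices 0,1. *)

(* Stieltjes transform of the semicircle law:
   m0 z = (-z + sqrt(z^2-4))/2 where sqrt(z^2-4) is the branch analytic on
   C \ [-2,2] with sqrt(z^2-4) ~ z at infinity; this branch is
   z * csqrt(1 - 4/z^2) (principal csqrt). *)
definition sqrt_branch :: "complex \<Rightarrow> complex" where
  "sqrt_branch z = z * csqrt (1 - 4 / z\<^sup>2)"

definition m0 :: "complex \<Rightarrow> complex" where
  "m0 z = (- z + sqrt_branch z) / 2"

definition ones_vec :: "nat \<Rightarrow> complex vec" where
  "ones_vec n = vec n (\<lambda>_. 1)"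

definition shifted :: "real mat \<Rightarrow> complex \<Rightarrow> complex mat" where
  "shifted A z = map_mat complex_of_real A - z \<cdot>\<^sub>m 1\<^sub>m (dim_row A)"

definition resolvent :: "real mat \<Rightarrow> complex \<Rightarrow> complex mat" where
  "resolvent A z = (THE B. B \<in> carrier_mat (dim_row A) (dim_row A) \<and>
       inverts_mat B (shifted A z) \<and> inverts_mat (shifted A z) B)"

definition minor12 :: "real mat \<Rightarrow> real mat" where
  "minor12 A = mat (dim_row A - 2) (dim_col A - 2) (\<lambda>(i, j). A $$ (i + 2, j + 2))"

definition block12 :: "complex mat \<Rightarrow> complex mat" where
  "block12 M = mat 2 2 (\<lambda>(i, j). M $$ (i, j))"

definition row_rest :: "real mat \<Rightarrow> nat \<Rightarrow> complex vec" where
  "row_rest A k = vec (dim_col A - 2) (\<lambda>j. complex_of_real (A $$ (k, j + 2)))"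

definition vnorm2 :: "complex vec \<Rightarrow> real" where
  "vnorm2 v = sqrt (\<Sum>i<dim_vec v. (cmod (v $ i))\<^sup>2)"

definition vnorm_inf :: "complex vec \<Rightarrow> real" where
  "vnorm_inf v = Max (insert 0 ((\<lambda>i. cmod (v $ i)) ` {..<dim_vec v}))"

definition spec_norm :: "complex mat \<Rightarrow> real" where
  "spec_norm M = Sup {vnorm2 (M *\<^sub>v v) | v. v \<in> carrier_vec (dim_col M) \<and> vnorm2 v = 1}"

end

(* Write R = (A - z)^-1, g = R^(12) 1 and u_k = 1 - a_k^T g. The matrix A - z maps (0, 0, g) to
   1 - (u_1, u_2, 0, ..., 0), so multiplying by R gives the Schur complement identity
   (R 1)_k = R_k1 u_1 + R_k2 u_2 (k = 1, 2): the top of R 1 equals (m0 I + E) u with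
   E = R_12 - m0 I. Since ||E|| <= delta <= |m0|/2, this forces |m0| ||u|| <= 2 ||(R 1)_{1,2}||,
   and the error to be bounded is exactly E u, of norm <= 2 delta ||(R 1)_{1,2}|| / |m0|.
   Finally m0 (m0 + z) = -1 gives |m0 z| >= 1/11 for |z| <= 10, whence C = 44.
   A - z is invertible because v* A v is real for real symmetric A, so (A - z) v = 0 forces
   Im z ||v||^2 = 0. *)

theory Submission
  imports Defs "Jordan_Normal_Form.Determinant"
begin

lemma vnorm2_eq_L2_set: "vnorm2 v = L2_set (\<lambda>i. cmod (v $ i)) {..<dim_vec v}"
  unfolding vnorm2_def L2_set_def ..

lemma power2_vnorm2: "(vnorm2 v)\<^sup>2 = (\<Sum>i<dim_vec v. (cmod (v $ i))\<^sup>2)"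
  unfolding vnorm2_def by (simp add: sum_nonneg)

lemma vnorm2_nonneg: "0 \<le> vnorm2 v"
  unfolding vnorm2_eq_L2_set by simp

lemma cmod_le_vnorm2: "i < dim_vec v \<Longrightarrow> cmod (v $ i) \<le> vnorm2 v"
  unfolding vnorm2_eq_L2_set by (rule member_le_L2_set) auto

lemma vnorm2_eq_0_iff: "vnorm2 v = 0 \<longleftrightarrow> v = 0\<^sub>v (dim_vec v)"
  unfolding vnorm2_eq_L2_set by (auto simp: L2_set_eq_0_iff intro!: eq_vecI) (metis index_zero_vec(1))

lemma vnorm2_smult: "vnorm2 (c \<cdot>\<^sub>v v) = cmod c * vnorm2 v"
  unfolding vnorm2_eq_L2_set by (simp add: L2_set_right_distrib norm_mult cong: L2_set_cong_simp)

lemma vnorm2_add_le: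
  assumes "dim_vec w = dim_vec v"
  shows "vnorm2 (v + w) \<le> vnorm2 v + vnorm2 w"
proof -
  have "vnorm2 (v + w) = L2_set (\<lambda>i. cmod (v $ i + w $ i)) {..<dim_vec v}"
    using assms unfolding vnorm2_eq_L2_set by (simp cong: L2_set_cong_simp)
  also have "\<dots> \<le> L2_set (\<lambda>i. cmod (v $ i) + cmod (w $ i)) {..<dim_vec v}"
    by (intro L2_set_mono norm_triangle_ineq) simp
  also have "\<dots> \<le> vnorm2 v + vnorm2 w"
    using assms L2_set_triangle_ineq unfolding vnorm2_eq_L2_set by metis
  finally show ?thesis .
qed

lemma vnorm2_le_sum_cmod: "vnorm2 v \<le> (\<Sum>i<dim_vec v. cmod (v $ i))"
  unfolding vnorm2_eq_L2_set by (rule L2_set_le_sum) simp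

lemma cmod_scalar_prod_le: "dim_vec w = dim_vec v \<Longrightarrow> cmod (v \<bullet> w) \<le> vnorm2 v * vnorm2 w"
proof -
  assume "dim_vec w = dim_vec v"
  then have "cmod (v \<bullet> w) \<le> (\<Sum>i<dim_vec v. \<bar>cmod (v $ i)\<bar> * \<bar>cmod (w $ i)\<bar>)"
    unfolding scalar_prod_def atLeast0LessThan by (auto intro: sum_norm_le simp: norm_mult)
  also have "\<dots> \<le> vnorm2 v * vnorm2 w"
    using \<open>dim_vec w = dim_vec v\<close> L2_set_mult_ineq[of "\<lambda>i. cmod (v $ i)" "\<lambda>i. cmod (w $ i)"]
    unfolding vnorm2_eq_L2_set by simp
  finally show ?thesis .
qed

lemma cmod_le_vnorm_inf: "i < dim_vec v \<Longrightarrow> cmod (v $ i) \<le> vnorm_inf v"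
  unfolding vnorm_inf_def by (intro Max_ge) auto

lemma vnorm2_prefix_le_vnorm_inf:
  assumes "d \<le> dim_vec y"
  shows "vnorm2 (vec d (\<lambda>k. y $ k)) \<le> real d * vnorm_inf y"
proof -
  have "vnorm2 (vec d (\<lambda>k. y $ k)) \<le> (\<Sum>k<d. cmod (y $ k))"
    using vnorm2_le_sum_cmod[of "vec d (\<lambda>k. y $ k)"] by simp
  also have "\<dots> \<le> (\<Sum>k<d. vnorm_inf y)"
    using assms by (intro sum_mono cmod_le_vnorm_inf) auto
  finally show ?thesis by simp
qed

lemma mult_mat_vec_nth:
  "A \<in> carrier_mat n m \<Longrightarrow> v \<in> carrier_vec m \<Longrightarrow> i < n \<Longrightarrow>
   (A *\<^sub>v v) $ i = (\<Sum>j<m. A $$ (i, j) * v $ j)"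
  unfolding mult_mat_vec_def scalar_prod_def by (auto simp: atLeast0LessThan)

lemma vnorm2_mult_mat_vec_le_rows:
  assumes A: "A \<in> carrier_mat n m" and v: "v \<in> carrier_vec m"
  shows "vnorm2 (A *\<^sub>v v) \<le> (\<Sum>i<n. vnorm2 (row A i)) * vnorm2 v"
proof -
  have "vnorm2 (A *\<^sub>v v) \<le> (\<Sum>i<n. cmod (row A i \<bullet> v))"
    using vnorm2_le_sum_cmod[of "A *\<^sub>v v"] A by simp
  also have "\<dots> \<le> (\<Sum>i<n. vnorm2 (row A i) * vnorm2 v)"
    using A v by (intro sum_mono cmod_scalar_prod_le) simp
  finally show ?thesis by (simp add: sum_distrib_right)
qed

lemma vnorm2_mult_mat_vec_le_spec_norm:
  assumes A: "A \<in> carrier_mat n m" and v: "v \<in> carrier_vec m"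
  shows "vnorm2 (A *\<^sub>v v) \<le> spec_norm A * vnorm2 v"
proof (cases "vnorm2 v = 0")
  case True
  then have "v = 0\<^sub>v m" using v vnorm2_eq_0_iff by auto
  then have "A *\<^sub>v v = 0\<^sub>v n" using A by (auto intro!: eq_vecI)
  then show ?thesis using True vnorm2_eq_0_iff[of "0\<^sub>v n"] by simp
next
  case False
  define N where "N = vnorm2 v"
  have N: "N > 0" using False vnorm2_nonneg[of v] unfolding N_def by linarith
  define w where "w = complex_of_real (1 / N) \<cdot>\<^sub>v v"
  have w: "w \<in> carrier_vec m" "vnorm2 w = 1"
    using v N unfolding w_def by (auto simp: vnorm2_smult N_def norm_divide)
  have Aw: "vnorm2 (A *\<^sub>v w) = vnorm2 (A *\<^sub>v v) / N"
    unfolding w_def mult_mat_vec[OF A v] vnorm2_smult using N by (simp add: norm_divide)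
  have "bdd_above {vnorm2 (A *\<^sub>v u) | u. u \<in> carrier_vec (dim_col A) \<and> vnorm2 u = 1}"
    using vnorm2_mult_mat_vec_le_rows[OF A] A
    by (intro bdd_aboveI[of _ "\<Sum>i<n. vnorm2 (row A i)"]) fastforce
  then have "vnorm2 (A *\<^sub>v w) \<le> spec_norm A"
    unfolding spec_norm_def using w A by (intro cSup_upper) auto
  then show ?thesis using N unfolding Aw N_def[symmetric] by (simp add: divide_le_eq)
qed

lemma smult_one_mult_mat_vec: "v \<in> carrier_vec n \<Longrightarrow> (c \<cdot>\<^sub>m 1\<^sub>m n) *\<^sub>v v = c \<cdot>\<^sub>v v"
  for v :: "'a :: comm_ring_1 vec"
  by (intro eq_vecI) (auto simp: mult_mat_vec_nth[of _ n n] sum.delta)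

lemma scalar_plus_mult_mat_vec:
  "E \<in> carrier_mat d d \<Longrightarrow> u \<in> carrier_vec d \<Longrightarrow> (c \<cdot>\<^sub>m 1\<^sub>m d + E) *\<^sub>v u = c \<cdot>\<^sub>v u + E *\<^sub>v u"
  for E :: "'a :: comm_ring_1 mat"
  by (simp add: add_mult_distrib_mat_vec[of _ d d] smult_one_mult_mat_vec)

lemma cmod_mult_vnorm2_le_perturbed_scalar:
  assumes E: "E \<in> carrier_mat d d" and u: "u \<in> carrier_vec d"
    and small: "spec_norm E \<le> cmod c / 2"
  shows "cmod c * vnorm2 u \<le> 2 * vnorm2 ((c \<cdot>\<^sub>m 1\<^sub>m d + E) *\<^sub>v u)"
proof -
  have "c \<cdot>\<^sub>v u = (c \<cdot>\<^sub>m 1\<^sub>m d + E) *\<^sub>v u + (-1) \<cdot>\<^sub>v (E *\<^sub>v u)"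
    using E u by (intro eq_vecI) (auto simp: scalar_plus_mult_mat_vec)
  then have "cmod c * vnorm2 u = vnorm2 ((c \<cdot>\<^sub>m 1\<^sub>m d + E) *\<^sub>v u + (-1) \<cdot>\<^sub>v (E *\<^sub>v u))"
    by (metis vnorm2_smult)
  also have "\<dots> \<le> vnorm2 ((c \<cdot>\<^sub>m 1\<^sub>m d + E) *\<^sub>v u) + vnorm2 (E *\<^sub>v u)"
    using E u vnorm2_add_le[of "(-1) \<cdot>\<^sub>v (E *\<^sub>v u)" "(c \<cdot>\<^sub>m 1\<^sub>m d + E) *\<^sub>v u"]
    by (simp add: vnorm2_smult)
  also have "vnorm2 (E *\<^sub>v u) \<le> cmod c / 2 * vnorm2 u"
    using vnorm2_mult_mat_vec_le_spec_norm[OF E u] small vnorm2_nonneg[of u]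
    by (meson mult_right_mono order_trans)
  finally show ?thesis by simp
qed

lemma cmod_mult_vnorm2_perturbation_le:
  assumes E: "E \<in> carrier_mat d d" and u: "u \<in> carrier_vec d"
    and E_small: "spec_norm E \<le> \<delta>" and \<delta>_small: "\<delta> \<le> cmod c / 2" and \<delta>: "0 \<le> \<delta>"
  shows "cmod c * vnorm2 (E *\<^sub>v u) \<le> 2 * \<delta> * vnorm2 ((c \<cdot>\<^sub>m 1\<^sub>m d + E) *\<^sub>v u)"
proof -
  have "vnorm2 (E *\<^sub>v u) \<le> \<delta> * vnorm2 u"
    using vnorm2_mult_mat_vec_le_spec_norm[OF E u] mult_right_mono[OF E_small vnorm2_nonneg]
    by (rule order_trans)
  then have "cmod c * vnorm2 (E *\<^sub>v u) \<le> \<delta> * (cmod c * vnorm2 u)"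
    using mult_left_mono[OF _ norm_ge_zero] by (metis mult.left_commute)
  also have "\<dots> \<le> \<delta> * (2 * vnorm2 ((c \<cdot>\<^sub>m 1\<^sub>m d + E) *\<^sub>v u))"
    using E_small \<delta>_small \<delta>
    by (intro mult_left_mono cmod_mult_vnorm2_le_perturbed_scalar[OF E u]) auto
  finally show ?thesis by simp
qed

lemma cmod_mult_perturbed_scalar_entry_le:
  assumes E: "E \<in> carrier_mat d d" and u: "u \<in> carrier_vec d" and k: "k < d"
    and "spec_norm E \<le> \<delta>" and "\<delta> \<le> cmod c / 2" and "0 \<le> \<delta>"
  shows "cmod c * cmod (((c \<cdot>\<^sub>m 1\<^sub>m d + E) *\<^sub>v u) $ k - c * u $ k)
    \<le> 2 * \<delta> * vnorm2 ((c \<cdot>\<^sub>m 1\<^sub>m d + E) *\<^sub>v u)"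
proof -
  have "((c \<cdot>\<^sub>m 1\<^sub>m d + E) *\<^sub>v u) $ k - c * u $ k = (E *\<^sub>v u) $ k"
    using E u k by (simp add: scalar_plus_mult_mat_vec)
  then have "cmod (((c \<cdot>\<^sub>m 1\<^sub>m d + E) *\<^sub>v u) $ k - c * u $ k) \<le> vnorm2 (E *\<^sub>v u)"
    using E k cmod_le_vnorm2[of k "E *\<^sub>v u"] by simp
  then have "cmod c * cmod (((c \<cdot>\<^sub>m 1\<^sub>m d + E) *\<^sub>v u) $ k - c * u $ k)
      \<le> cmod c * vnorm2 (E *\<^sub>v u)"
    by (rule mult_left_mono) simp
  also have "\<dots> \<le> 2 * \<delta> * vnorm2 ((c \<cdot>\<^sub>m 1\<^sub>m d + E) *\<^sub>v u)"
    using cmod_mult_vnorm2_perturbation_le[OF E u] assms(4-6) .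
  finally show ?thesis .
qed

lemma carrier_shifted: "A \<in> carrier_mat n n \<Longrightarrow> shifted A z \<in> carrier_mat n n"
  unfolding shifted_def by auto

lemma index_shifted:
  "A \<in> carrier_mat n n \<Longrightarrow> i < n \<Longrightarrow> j < n \<Longrightarrow>
   shifted A z $$ (i, j) = complex_of_real (A $$ (i, j)) - (if i = j then z else 0)"
  unfolding shifted_def by auto

lemma symmetric_mat_index:
  assumes "A \<in> carrier_mat n n" and "transpose_mat A = A" and "i < n" and "j < n"
  shows "A $$ (i, j) = A $$ (j, i)"
proof -
  have "A $$ (i, j) = transpose_mat A $$ (j, i)" using assms(1,3,4) by simp
  then show ?thesis unfolding assms(2) .
qed

lemma real_symmetric_form_is_real:
  assumes "A \<in> carrier_mat n n" and "transpose_mat A = A"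
  shows "Im (\<Sum>i<n. \<Sum>j<n. cnj (v $ i) * complex_of_real (A $$ (i, j)) * v $ j) = 0"
proof -
  let ?s = "\<Sum>i<n. \<Sum>j<n. cnj (v $ i) * complex_of_real (A $$ (i, j)) * v $ j"
  have "cnj ?s = (\<Sum>i<n. \<Sum>j<n. v $ i * complex_of_real (A $$ (i, j)) * cnj (v $ j))"
    by simp
  also have "\<dots> = (\<Sum>j<n. \<Sum>i<n. v $ i * complex_of_real (A $$ (i, j)) * cnj (v $ j))"
    by (rule sum.swap)
  also have "\<dots> = ?s"
  proof (intro sum.cong refl)
    fix i j assume "i \<in> {..<n}" "j \<in> {..<n}"
    then have "A $$ (j, i) = A $$ (i, j)" by (intro symmetric_mat_index[OF assms]) auto
    then show "v $ j * complex_of_real (A $$ (j, i)) * cnj (v $ i)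
      = cnj (v $ i) * complex_of_real (A $$ (i, j)) * v $ j" by simp
  qed
  finally have "Im (cnj ?s) = Im ?s" by (rule arg_cong)
  then show ?thesis by (simp del: cnj_sum Im_sum)
qed

lemma shifted_mult_vec_eq_zero_imp_zero:
  assumes A: "A \<in> carrier_mat n n" and sym: "transpose_mat A = A" and z: "Im z \<noteq> 0"
    and v: "v \<in> carrier_vec n" and kernel: "shifted A z *\<^sub>v v = 0\<^sub>v n"
  shows "v = 0\<^sub>v n"
proof -
  have eigen: "(\<Sum>j<n. complex_of_real (A $$ (i, j)) * v $ j) = z * v $ i" if i: "i < n" for i
  proof -
    have "(shifted A z *\<^sub>v v) $ i = (\<Sum>j<n. shifted A z $$ (i, j) * v $ j)"
      by (rule mult_mat_vec_nth[OF carrier_shifted[OF A] v i])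
    then have "0 = (\<Sum>j<n. shifted A z $$ (i, j) * v $ j)"
      using kernel i by simp
    also have "\<dots> = (\<Sum>j<n. complex_of_real (A $$ (i, j)) * v $ j - (if i = j then z * v $ i else 0))"
      using i by (intro sum.cong) (auto simp: index_shifted[OF A] left_diff_distrib)
    also have "\<dots> = (\<Sum>j<n. complex_of_real (A $$ (i, j)) * v $ j) - z * v $ i"
      using i by (simp add: sum_subtractf)
    finally show ?thesis by simp
  qed
  have "(\<Sum>i<n. \<Sum>j<n. cnj (v $ i) * complex_of_real (A $$ (i, j)) * v $ j)
      = (\<Sum>i<n. cnj (v $ i) * (\<Sum>j<n. complex_of_real (A $$ (i, j)) * v $ j))"
    by (simp add: sum_distrib_left mult.assoc)
  also have "\<dots> = (\<Sum>i<n. z * (v $ i * cnj (v $ i)))"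
    by (intro sum.cong refl) (simp add: eigen)
  also have "\<dots> = z * complex_of_real ((vnorm2 v)\<^sup>2)"
    using v by (simp add: power2_vnorm2 complex_norm_square[symmetric] sum_distrib_left)
  finally have "Im z * (vnorm2 v)\<^sup>2 = 0"
    using real_symmetric_form_is_real[OF A sym, of v] by simp
  then have "vnorm2 v = 0" using z by simp
  then show ?thesis using v vnorm2_eq_0_iff by auto
qed

lemma resolvent_eqI:
  assumes A: "A \<in> carrier_mat n n" and B: "B \<in> carrier_mat n n"
    and BS: "B * shifted A z = 1\<^sub>m n" and SB: "shifted A z * B = 1\<^sub>m n"
  shows "resolvent A z = B"
  unfolding resolvent_def
proof (rule the_equality)
  let ?S = "shifted A z"
  have S: "?S \<in> carrier_mat n n" by (rule carrier_shifted[OF A])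
  show "B \<in> carrier_mat (dim_row A) (dim_row A) \<and> inverts_mat B ?S \<and> inverts_mat ?S B"
    using A B S BS SB unfolding inverts_mat_def by auto
  fix C assume "C \<in> carrier_mat (dim_row A) (dim_row A) \<and> inverts_mat C ?S \<and> inverts_mat ?S C"
  then have C: "C \<in> carrier_mat n n" and CS: "C * ?S = 1\<^sub>m n"
    using A unfolding inverts_mat_def by auto
  have "C = C * (?S * B)" using C SB by simp
  also have "\<dots> = (C * ?S) * B" using C S B by (simp add: assoc_mult_mat)
  finally show "C = B" using B CS by simp
qed

lemma resolvent_inverse:
  assumes A: "A \<in> carrier_mat n n" and sym: "transpose_mat A = A" and z: "Im z \<noteq> 0"
  shows "resolvent A z \<in> carrier_mat n n"
    and "resolvent A z * shifted A z = 1\<^sub>m n"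
    and "shifted A z * resolvent A z = 1\<^sub>m n"
proof -
  let ?S = "shifted A z"
  have S: "?S \<in> carrier_mat n n" by (rule carrier_shifted[OF A])
  have "det ?S \<noteq> 0"
    using det_0_iff_vec_prod_zero_field[OF S] shifted_mult_vec_eq_zero_imp_zero[OF A sym z] by blast
  from det_non_zero_imp_unit[OF S this, of "()"]
  obtain B where B: "B \<in> carrier_mat n n" "B * ?S = 1\<^sub>m n" "?S * B = 1\<^sub>m n"
    unfolding Units_def ring_mat_simps by auto
  with resolvent_eqI[OF A] show "resolvent A z \<in> carrier_mat n n"
    "resolvent A z * ?S = 1\<^sub>m n" "?S * resolvent A z = 1\<^sub>m n" by auto
qed

lemma carrier_minor12: "A \<in> carrier_mat n n \<Longrightarrow> minor12 A \<in> carrier_mat (n - 2) (n - 2)"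
  unfolding minor12_def by auto

lemma minor12_symmetric:
  assumes "A \<in> carrier_mat n n" and "transpose_mat A = A"
  shows "transpose_mat (minor12 A) = minor12 A"
  using assms(1) unfolding minor12_def by (intro eq_matI) (auto simp: symmetric_mat_index[OF assms])

lemma index_shifted_minor12:
  assumes A: "A \<in> carrier_mat n n" and "i < n - 2" and "j < n - 2"
  shows "shifted (minor12 A) z $$ (i, j) = shifted A z $$ (i + 2, j + 2)"
proof -
  have "minor12 A $$ (i, j) = A $$ (i + 2, j + 2)"
    using assms unfolding minor12_def by simp
  then show ?thesis
    using assms by (simp add: index_shifted[OF carrier_minor12[OF A]] index_shifted[OF A])
qed

lemma sum_lessThan_Suc_Suc_shift: "(\<Sum>j<Suc (Suc m). f j) = f 0 + f 1 + (\<Sum>j<m. f (j + 2))"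
  by (simp only: sum.lessThan_Suc_shift) (simp add: numeral_2_eq_2 add.assoc)

lemma shifted_mult_vec_pad:
  assumes A: "A \<in> carrier_mat n n" and g: "g \<in> carrier_vec (n - 2)" and i: "i < n" and n: "2 \<le> n"
  shows "(shifted A z *\<^sub>v vec n (\<lambda>j. if j < 2 then 0 else g $ (j - 2))) $ i =
    (if i < 2 then row_rest A i \<bullet> g else (shifted (minor12 A) z *\<^sub>v g) $ (i - 2))"
proof -
  obtain m where nm: "n = Suc (Suc m)" using n by (metis add_2_eq_Suc le_Suc_ex)
  have "(shifted A z *\<^sub>v vec n (\<lambda>j. if j < 2 then 0 else g $ (j - 2))) $ i
      = (\<Sum>j<m. shifted A z $$ (i, j + 2) * g $ j)"
    using mult_mat_vec_nth[OF carrier_shifted[OF A] _ i] unfolding nm sum_lessThan_Suc_Suc_shift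
    by (simp add: nm)
  also have "\<dots> = (if i < 2 then row_rest A i \<bullet> g else (shifted (minor12 A) z *\<^sub>v g) $ (i - 2))"
  proof (cases "i < 2")
    case True
    then show ?thesis using A g i
      by (auto simp: index_shifted scalar_prod_def row_rest_def nm atLeast0LessThan intro!: sum.cong)
  next
    case False
    have "(shifted (minor12 A) z *\<^sub>v g) $ (i - 2) = (\<Sum>j<n - 2. shifted (minor12 A) z $$ (i - 2, j) * g $ j)"
      using False i by (intro mult_mat_vec_nth[OF carrier_shifted[OF carrier_minor12[OF A]] g]) simp
    moreover have "Suc (Suc (i - 2)) = i" using False by simp
    ultimately show ?thesis
      using False i by (auto simp: index_shifted_minor12[OF A] nm intro!: sum.cong)
  qed
  finally show ?thesis .
qed

lemma resolvent_ones_vec_top: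
  assumes A: "A \<in> carrier_mat n n" and sym: "transpose_mat A = A" and z: "Im z \<noteq> 0"
    and n: "2 \<le> n"
  shows "vec 2 (\<lambda>k. (resolvent A z *\<^sub>v ones_vec n) $ k) = block12 (resolvent A z) *\<^sub>v
    vec 2 (\<lambda>k. 1 - row_rest A k \<bullet> (resolvent (minor12 A) z *\<^sub>v ones_vec (n - 2)))"
proof -
  let ?R = "resolvent A z" and ?S = "shifted A z"
  define g where "g = resolvent (minor12 A) z *\<^sub>v ones_vec (n - 2)"
  define u where "u = (\<lambda>k. 1 - row_rest A k \<bullet> g)"
  define v where "v = vec n (\<lambda>j. if j < 2 then 0 else g $ (j - 2))"
  define w where "w = vec n (\<lambda>j. if j < 2 then u j else 0)"
  note R = resolvent_inverse[OF A sym z]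
  note G = resolvent_inverse[OF carrier_minor12[OF A] minor12_symmetric[OF A sym] z]
  have S: "?S \<in> carrier_mat n n" by (rule carrier_shifted[OF A])
  have g: "g \<in> carrier_vec (n - 2)" unfolding g_def using G(1) by (simp add: ones_vec_def)
  have "shifted (minor12 A) z *\<^sub>v g = ones_vec (n - 2)"
    unfolding g_def using G carrier_shifted[OF carrier_minor12[OF A]]
    by (simp add: ones_vec_def flip: assoc_mult_mat_vec[of _ "n - 2" "n - 2" _ "n - 2"])
  then have "?S *\<^sub>v v = ones_vec n - w"
    unfolding v_def using shifted_mult_vec_pad[OF A g _ n, of _ z] S
    by (intro eq_vecI) (auto simp: ones_vec_def w_def u_def simp del: index_mult_mat_vec)
  then have "ones_vec n = ?S *\<^sub>v v + w"
    by (intro eq_vecI) (auto simp: ones_vec_def w_def)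
  then have R_ones: "?R *\<^sub>v ones_vec n = v + ?R *\<^sub>v w"
    using R S by (simp add: mult_add_distrib_mat_vec[of _ n n] v_def w_def flip: assoc_mult_mat_vec)
  obtain m where nm: "n = Suc (Suc m)" using n by (metis add_2_eq_Suc le_Suc_ex)
  have w: "w \<in> carrier_vec n" unfolding w_def by simp
  have "(?R *\<^sub>v ones_vec n) $ k = ?R $$ (k, 0) * u 0 + ?R $$ (k, 1) * u 1" if k: "k < 2" for k
  proof -
    have "(?R *\<^sub>v ones_vec n) $ k = (?R *\<^sub>v w) $ k"
      using R_ones k n R(1) by (simp add: v_def)
    also have "\<dots> = (\<Sum>j<Suc (Suc m). ?R $$ (k, j) * w $ j)"
      using mult_mat_vec_nth[OF R(1) w] k n unfolding nm by simp
    also have "\<dots> = ?R $$ (k, 0) * u 0 + ?R $$ (k, 1) * u 1"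
      unfolding sum_lessThan_Suc_Suc_shift by (simp add: w_def nm)
    finally show ?thesis .
  qed
  then show ?thesis
    unfolding u_def g_def block12_def
    by (intro eq_vecI) (auto simp: mult_mat_vec_nth[of _ 2 2] numeral_2_eq_2 less_Suc_eq
        simp del: index_mult_mat_vec)
qed

lemma m0_mult_m0_plus:
  assumes "z \<noteq> 0"
  shows "m0 z * (m0 z + z) = -1"
proof -
  have "(sqrt_branch z)\<^sup>2 = z\<^sup>2 * (1 - 4 / z\<^sup>2)"
    unfolding sqrt_branch_def by (simp add: power_mult_distrib)
  also have "\<dots> = z\<^sup>2 - 4" using assms by (simp add: field_simps)
  finally show ?thesis
    unfolding m0_def by (simp add: field_simps power2_eq_square)
qed

(* z = 0 must be excluded: there 4 / z^2 = 0 by convention, and m0 0 = 0. *)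
lemma cmod_m0_ge:
  assumes "z \<noteq> 0" and "cmod z \<le> r"
  shows "1 / (r + 1) \<le> cmod (m0 z)"
proof -
  have r: "0 \<le> r" using assms(2) norm_ge_zero[of z] by linarith
  consider "cmod (m0 z) \<ge> 1" | "cmod (m0 z) < 1" by linarith
  then show ?thesis
  proof cases
    case 1
    then have "1 * 1 \<le> cmod (m0 z) * (r + 1)" using r by (intro mult_mono) auto
    then show ?thesis using r by (simp add: divide_le_eq)
  next
    case 2
    have "1 = cmod (m0 z) * cmod (m0 z + z)"
      using m0_mult_m0_plus[OF assms(1)] by (metis norm_minus_cancel norm_mult norm_one)
    also have "\<dots> \<le> cmod (m0 z) * (r + 1)"
      using 2 assms(2) norm_triangle_ineq[of "m0 z" z] by (intro mult_left_mono) auto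
    finally show ?thesis using r by (simp add: divide_le_eq)
  qed
qed

theorem lemma5p2:
  shows "\<exists>C>0. \<forall>(n::nat) (A::real mat) (z::complex) (\<delta>::real).
    n \<ge> 3 \<longrightarrow> A \<in> carrier_mat n n \<longrightarrow> transpose_mat A = A \<longrightarrow>
    Im z \<noteq> 0 \<longrightarrow> cmod z \<le> 10 \<longrightarrow>
    0 \<le> \<delta> \<longrightarrow>
    \<delta> \<le> Inf ((\<lambda>w. cmod (m0 w)) ` {w. w \<notin> complex_of_real ` {-2..2} \<and> cmod w \<le> 10}) / 2 \<longrightarrow>
    spec_norm (block12 (resolvent A z) - m0 z \<cdot>\<^sub>m 1\<^sub>m 2) \<le> \<delta> \<longrightarrow>
    (\<forall>k\<in>{0, 1}.
       cmod ((resolvent A z *\<^sub>v ones_vec n) $ k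
             - m0 z * (1 - row_rest A k \<bullet> (resolvent (minor12 A) z *\<^sub>v ones_vec (n - 2))))
       \<le> C * \<delta> * (1 + vnorm_inf (resolvent A z *\<^sub>v ones_vec n)))"
proof (intro exI[of _ 44] conjI allI impI ballI)
  show "(0::real) < 44" by simp
  fix n A z \<delta> and k :: nat
  assume n: "n \<ge> 3" and A: "A \<in> carrier_mat n n" and sym: "transpose_mat A = A"
    and z: "Im z \<noteq> 0" and z_le: "cmod z \<le> 10" and \<delta>: "0 \<le> \<delta>"
    and \<delta>_le_Inf: "\<delta> \<le> Inf ((\<lambda>w. cmod (m0 w)) ` {w. w \<notin> complex_of_real ` {-2..2} \<and> cmod w \<le> 10}) / 2"
    and E_small: "spec_norm (block12 (resolvent A z) - m0 z \<cdot>\<^sub>m 1\<^sub>m 2) \<le> \<delta>"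
    and k: "k \<in> {0, 1}"
  define y where "y = resolvent A z *\<^sub>v ones_vec n"
  define u where "u = vec 2 (\<lambda>k. 1 - row_rest A k \<bullet> (resolvent (minor12 A) z *\<^sub>v ones_vec (n - 2)))"
  define E where "E = block12 (resolvent A z) - m0 z \<cdot>\<^sub>m 1\<^sub>m 2"
  have E: "E \<in> carrier_mat 2 2" unfolding E_def by (intro minus_carrier_mat) simp
  have u: "u \<in> carrier_vec 2" unfolding u_def by simp
  have "block12 (resolvent A z) = m0 z \<cdot>\<^sub>m 1\<^sub>m 2 + E"
    unfolding E_def block12_def by (intro eq_matI) auto
  then have y_top: "vec 2 (\<lambda>k. y $ k) = (m0 z \<cdot>\<^sub>m 1\<^sub>m 2 + E) *\<^sub>v u"
    using resolvent_ones_vec_top[OF A sym z] n unfolding y_def u_def by simp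
  have "Inf ((\<lambda>w. cmod (m0 w)) ` {w. w \<notin> complex_of_real ` {-2..2} \<and> cmod w \<le> 10}) \<le> cmod (m0 z)"
    using z z_le by (intro cInf_lower bdd_belowI[of _ 0]) auto
  with \<delta>_le_Inf have \<delta>_small: "\<delta> \<le> cmod (m0 z) / 2" by simp
  have "cmod (m0 z) * cmod (y $ k - m0 z * u $ k) \<le> 2 * \<delta> * vnorm2 (vec 2 (\<lambda>k. y $ k))"
    using cmod_mult_perturbed_scalar_entry_le[OF E u _ E_small[folded E_def] \<delta>_small \<delta>, of k] k
    unfolding y_top[symmetric] by fastforce
  also have "\<dots> \<le> 2 * \<delta> * (2 * vnorm_inf y)"
    using vnorm2_prefix_le_vnorm_inf[of 2 y] resolvent_inverse(1)[OF A sym z] n \<delta>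
    unfolding y_def by (intro mult_left_mono) auto
  finally have residual: "cmod (m0 z) * cmod (y $ k - m0 z * u $ k) \<le> 4 * \<delta> * vnorm_inf y"
    by simp
  have "z \<noteq> 0" using z by (metis zero_complex.sel(2))
  then have "1 / 11 \<le> cmod (m0 z)" using cmod_m0_ge[OF _ z_le] by simp
  then have "cmod (y $ k - m0 z * u $ k) \<le> 44 * \<delta> * vnorm_inf y"
    using mult_right_mono[OF _ norm_ge_zero, of "1 / 11" "cmod (m0 z)" "y $ k - m0 z * u $ k"]
      residual by linarith
  also have "\<dots> \<le> 44 * \<delta> * (1 + vnorm_inf y)"
    using \<delta> by (intro mult_left_mono) auto
  finally show "cmod ((resolvent A z *\<^sub>v ones_vec n) $ k
      - m0 z * (1 - row_rest A k \<bullet> (resolvent (minor12 A) z *\<^sub>v ones_vec (n - 2))))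
    \<le> 44 * \<delta> * (1 + vnorm_inf (resolvent A z *\<^sub>v ones_vec n))"
    using k unfolding y_def u_def by auto
qed

end
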